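(* Let $n\ge 3$ and consider the regular-polygon generalized probabilistic theory with state space $\Omega_n$ and effect set $\mathcal{E}_n$ (defined in the context). If $n$ is odd with $n\ge 5$, or $n$ is even with $n\ge 6$, then this theory does not satisfy Information Symmetry. That is, there exist two pure states $\omega,\omega'\in\Omega_n$ such that every minimum-error measurement $\{e,u-e\}$ for discriminating $\omega$ and $\omega'$ in which $e$ is an extremal point of $\mathcal{E}_n$ has $p(e\mid\omega')\neq p(u-e\mid\omega)$.
   Context: **Regular polygon model.** Fix $n\ge3$ and set $r_n=\sqrt{\sec(\pi/n)}$. - **Pure states.** These are $\omega_i=\big(r_n\cos\tfrac{2\pi i}{n},\,r_n\sin\tfrac{2\pi i}{n},\,1\big)^T\in\mathbb{R}^3$ for $i=0,\dots,n-1$. The state space $\Omega_n$ is their convex hull. - **Unit effect.** $u=(0,0,1)^T$. - **Extremal effects, even $n$.** $e_i=\tfrac12\big(r_n\cos\tfrac{(2i-1)\pi}{n},\,r_n\sin\tfrac{(2i-1)\pi}{n},\,1\big)^T$. - **Extremal effects, odd $n$.** $e_i=\tfrac{1}{1+r_n^2}\big(r_n\cos\tfrac{2\pi i}{n},\,r_n\sin\tfrac{2\pi i}{n},\,1\big)^T$. - **Complements.** $\bar e_i=u-e_i$. - **Effect set.** $\mathcal{E}_n$ is the convex hull of $0$, $u$ and $\{e_i,\bar e_i\}_{i=0}^{n-1}$. - **Probabilities.** The probability that effect $e$ clicks on state $\omega$ is $p(e\mid\omega)=e\cdot\omega$, the Euclidean inner product. - **Measurements.** A two-outcome measurement is a pair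 $\{e,u-e\}$ with $e\in\mathcal{E}_n$. **Binary discrimination with uniform prior.** One of two states $\omega_1,\omega_2$ is prepared, each with probability $1/2$. One performs $\{e_1,e_2\}$ with $e_1+e_2=u$ and guesses $\omega_i$ when $e_i$ clicks. - The two error probabilities are $p_{12}=p(e_1\mid\omega_2)$ and $p_{21}=p(e_2\mid\omega_1)$. - The total error is $p_E=\tfrac12(p_{12}+p_{21})$. - A minimum-error measurement is one minimizing $p_E$ over all allowed two-outcome measurements. **Information Symmetry (IS).** A theory satisfies IS if, for every pair of distinct pure states, there is a minimum-error measurement $\{e,u-e\}$ with $e$ an extremal point of the effect set such that $p_{12}=p_{21}$. *)

theory Defs
  imports "HOL-Analysis.Analysis"
begin

definition rn :: "nat \<Rightarrow> real" where
  "rn n = sqrt (1 / cos (pi / real n))"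

definition pure_state :: "nat \<Rightarrow> nat \<Rightarrow> real^3" where
  "pure_state n i = vector [rn n * cos (2 * pi * real i / real n),
                            rn n * sin (2 * pi * real i / real n), 1]"

definition pure_states :: "nat \<Rightarrow> (real^3) set" where
  "pure_states n = {pure_state n i | i. i < n}"

definition state_space :: "nat \<Rightarrow> (real^3) set" where
  "state_space n = convex hull (pure_states n)"

definition unit_eff :: "real^3" where
  "unit_eff = vector [0, 0, 1]"

definition ext_eff :: "nat \<Rightarrow> nat \<Rightarrow> real^3" where
  "ext_eff n i =
     (if even n then
        (1/2) *\<^sub>R vector [rn n * cos ((2 * real i - 1) * pi / real n),
                           rn n * sin ((2 * real i - 1) * pi / real n), 1]
      else
        (1 / (1 + (rn n)^2)) *\<^sub>R vector [rn n * cos (2 * pi * real i / real n),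
                                         rn n * sin (2 * pi * real i / real n), 1])"

definition effect_set :: "nat \<Rightarrow> (real^3) set" where
  "effect_set n = convex hull ({0, unit_eff} \<union> {ext_eff n i | i. i < n}
                                \<union> {unit_eff - ext_eff n i | i. i < n})"

definition prob :: "real^3 \<Rightarrow> real^3 \<Rightarrow> real" where
  "prob e w = e \<bullet> w"

text \<open>Total error of measurement {e, u - e} (guess w1 on e, w2 on u - e), uniform prior.\<close>
definition total_error :: "real^3 \<Rightarrow> real^3 \<Rightarrow> real^3 \<Rightarrow> real" where
  "total_error w1 w2 e = (prob e w2 + prob (unit_eff - e) w1) / 2"

definition min_error_meas :: "nat \<Rightarrow> real^3 \<Rightarrow> real^3 \<Rightarrow> real^3 \<Rightarrow> bool" where
  "min_error_meas n w1 w2 e \<longleftrightarrow> e \<in> effect_set n \<and>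
     (\<forall>e' \<in> effect_set n. total_error w1 w2 e \<le> total_error w1 w2 e')"

definition information_symmetry :: "nat \<Rightarrow> bool" where
  "information_symmetry n \<longleftrightarrow>
     (\<forall>w1 \<in> pure_states n. \<forall>w2 \<in> pure_states n. w1 \<noteq> w2 \<longrightarrow>
        (\<exists>e. min_error_meas n w1 w2 e \<and> e extreme_point_of (effect_set n) \<and>
             prob e w2 = prob (unit_eff - e) w1))"

end

theory Submission
  imports Defs
begin

text \<open>
  For pure states \<open>\<omega>\<^sub>0\<close> and \<open>\<omega>\<^sub>b\<close>, the two error probabilities of \<open>{e, u - e}\<close> agree iff
  \<open>e \<bullet> (\<omega>\<^sub>0 + \<omega>\<^sub>b) = 1\<close>. The extremal effects \<open>0\<close> and \<open>u\<close> never satisfy this, and \<open>u - e\<^sub>i\<close>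
  does iff \<open>e\<^sub>i\<close> does, so it suffices to choose \<open>b\<close> with \<open>e\<^sub>i \<bullet> (\<omega>\<^sub>0 + \<omega>\<^sub>b) \<noteq> 1\<close> for all \<open>i\<close>. In polar form \<open>e\<^sub>i \<bullet> (\<omega>\<^sub>0 + \<omega>\<^sub>b)\<close>
  is an affine function of \<open>cos t cos (\<phi>\<^sub>i - t)\<close> with \<open>t = b\<pi>/n\<close>. For even \<open>n\<close> the equation
  forces \<open>cos ((2i - 1 - b)\<pi>/n) = 0\<close>, which a parity argument modulo 4 excludes for \<open>b = 1\<close> when
  \<open>n \<equiv> 2\<close> and for \<open>b = 2\<close> when \<open>n \<equiv> 0 (mod 4)\<close>. For odd \<open>n\<close> and \<open>b = 1\<close> it forces
  \<open>cos ((2i - 1)\<pi>/n) = (sec (\<pi>/n) - 1)/2\<close>, a value strictly between \<open>0\<close> and \<open>sin (\<pi>/2n)\<close>,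
  and no cosine of a multiple of \<open>\<pi>/n\<close> lies in that gap.
\<close>

lemma inner_vector3: "(vector [a, b, c] :: real^3) \<bullet> vector [x, y, z] = a * x + b * y + c * z"
  by (simp add: inner_vec_def sum_3)

lemma inner_polar_pair:
  "(vector [r * cos p, r * sin p, 1] :: real^3)
     \<bullet> (vector [r, 0, 1] + vector [r * cos (2 * t), r * sin (2 * t), 1])
     = 2 * r\<^sup>2 * cos t * cos (p - t) + 2"
  unfolding inner_add_right inner_vector3 cos_double_cos sin_double cos_diff
  by (simp add: algebra_simps power2_eq_square)

lemma cos_pi_div_pos:
  assumes "n \<ge> 3" shows "cos (pi / real n) > 0"
proof (rule cos_gt_zero_pi)
  have "pi / real n \<le> pi / 3" using assms by (intro divide_left_mono) auto
  moreover have "0 < pi / real n" using assms by simp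
  ultimately show "-(pi / 2) < pi / real n" "pi / real n < pi / 2" by linarith+
qed

lemma rn_pos: "n \<ge> 3 \<Longrightarrow> rn n > 0"
  using cos_pi_div_pos by (simp add: rn_def)

lemma rn_squared: "n \<ge> 3 \<Longrightarrow> (rn n)\<^sup>2 * cos (pi / real n) = 1"
  using cos_pi_div_pos[of n] by (simp add: rn_def)

lemma pure_state_polar:
  "pure_state n b = vector [rn n * cos (2 * (real b * pi / real n)), rn n * sin (2 * (real b * pi / real n)), 1]"
  by (simp add: pure_state_def ac_simps)

text \<open>A cosine in that gap belongs to an angle strictly between \<open>(n - 1)\<pi>/2n\<close> and \<open>\<pi>/2\<close>.\<close>

lemma cos_int_multiple_pi_div_gap:
  fixes k :: int
  assumes "n > 0"
  shows "\<not> (0 < cos (of_int k * pi / real n) \<and> cos (of_int k * pi / real n) < sin (pi / (2 * real n)))"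
proof
  define h where "h = pi / (2 * real n)"
  assume "0 < cos (of_int k * pi / real n) \<and> cos (of_int k * pi / real n) < sin h"
  then have pos: "0 < cos (of_int k * pi / real n)" and small: "cos (of_int k * pi / real n) < cos (pi/2 - h)"
    by (simp_all add: h_def cos_sin_eq)
  define y where "y = arccos (cos (of_int k * pi / real n))"
  have y: "0 \<le> y" "y \<le> pi" "cos y = cos (of_int k * pi / real n)"
    using arccos[of "cos (of_int k * pi / real n)"] by (auto simp: y_def)
  have "0 < h" "h \<le> pi / 2" using assms by (auto simp: h_def field_simps)
  have "y < pi / 2"
    using pos y cos_mono_less_eq[of "pi/2" y] by simp
  have "pi / 2 - h < y"
    using small y \<open>0 < h\<close> \<open>h \<le> pi / 2\<close> cos_mono_less_eq[of y "pi/2 - h"] by simp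
  obtain k' :: int where k': "y = of_int k' * pi / real n"
  proof -
    obtain j where "j \<in> \<int>" and j: "of_int k * pi / real n = y + 2 * j * pi \<or> of_int k * pi / real n = - y + 2 * j * pi"
      using cos_eq y(3) by metis
    then obtain j' :: int where "j = of_int j'" by (auto elim: Ints_cases)
    with j assms have "y = of_int (k - 2 * j' * int n) * pi / real n \<or> y = of_int (2 * j' * int n - k) * pi / real n"
      by (auto simp: field_simps)
    then show thesis using that by blast
  qed
  have "(pi / 2 - h) * (2 * real n) < y * (2 * real n)" "y * (2 * real n) < pi / 2 * (2 * real n)"
    using \<open>pi / 2 - h < y\<close> \<open>y < pi / 2\<close> assms by (intro mult_strict_right_mono; simp)+
  moreover have "(pi / 2 - h) * (2 * real n) = pi * (real n - 1)" "pi / 2 * (2 * real n) = pi * real n"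
    using assms by (simp_all add: h_def field_simps)
  moreover have "y * (2 * real n) = pi * (2 * of_int k')"
    using k' assms by simp
  ultimately have "pi * (real n - 1) < pi * (2 * of_int k')" "pi * (2 * of_int k') < pi * real n"
    by simp_all
  then have "real n - 1 < 2 * of_int k'" "2 * of_int k' < real n"
    by simp_all
  then have "int n - 1 < 2 * k'" "2 * k' < int n" by linarith+
  then show False by linarith
qed

lemma sec_minus_one_half_bounds:
  assumes "n \<ge> 4"
  shows "0 < (1 / cos (pi / real n) - 1) / 2" "(1 / cos (pi / real n) - 1) / 2 < sin (pi / (2 * real n))"
proof -
  define s where "s = sin (pi / (2 * real n))"
  have "0 < pi / (2 * real n)" using assms by simp
  moreover have "pi / (2 * real n) \<le> pi / 8" using assms by (intro divide_left_mono) auto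
  ultimately have "0 < s" "s < 1 / 2"
    using pi_less_4 sin_x_le_x[of "pi / (2 * real n)"] by (auto simp: s_def intro!: sin_gt_zero)
  then have "s * s < 1 / 4" using mult_strict_mono[of s "1/2" s "1/2"] by simp
  have "cos (pi / real n) = 1 - 2 * s\<^sup>2"
    using cos_double_sin[of "pi / (2 * real n)"] assms by (simp add: s_def)
  then have half_sec: "(1 / cos (pi / real n) - 1) / 2 = s\<^sup>2 / (1 - 2 * s\<^sup>2)"
    using \<open>s * s < 1 / 4\<close> by (simp add: field_simps power2_eq_square)
  have "s < 1 - 2 * s\<^sup>2" using \<open>s < 1 / 2\<close> \<open>s * s < 1 / 4\<close> by (simp add: power2_eq_square)
  then have "s * s < s * (1 - 2 * s\<^sup>2)" using \<open>0 < s\<close> by (rule mult_strict_left_mono)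
  then show "(1 / cos (pi / real n) - 1) / 2 < sin (pi / (2 * real n))"
    unfolding half_sec s_def[symmetric] using \<open>s * s < 1 / 4\<close> by (simp add: pos_divide_less_eq power2_eq_square)
  show "0 < (1 / cos (pi / real n) - 1) / 2"
    unfolding half_sec using \<open>0 < s\<close> \<open>s * s < 1 / 4\<close> by (simp add: power2_eq_square)
qed

lemma pure_state_zero: "pure_state n 0 = vector [rn n, 0, 1]"
  by (simp add: pure_state_def)

lemma ext_eff_even_inner_pair:
  assumes "even n"
  shows "ext_eff n i \<bullet> (pure_state n 0 + pure_state n b)
           = (rn n)\<^sup>2 * cos (real b * pi / real n) * cos (of_int (2 * int i - 1 - int b) * pi / real n) + 1"
proof -
  have "ext_eff n i \<bullet> (pure_state n 0 + pure_state n b)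
      = 1/2 * (2 * (rn n)\<^sup>2 * cos (real b * pi / real n)
               * cos ((2 * real i - 1) * pi / real n - real b * pi / real n) + 2)"
    using assms unfolding ext_eff_def pure_state_zero pure_state_polar[of n b]
    by (simp only: if_True inner_scaleR_left inner_polar_pair)
  moreover have "(2 * real i - 1) * pi / real n - real b * pi / real n = of_int (2 * int i - 1 - int b) * pi / real n"
    by (simp add: diff_divide_distrib[symmetric] algebra_simps)
  ultimately show ?thesis by simp
qed

lemma ext_eff_odd_inner_pair:
  assumes "odd n"
  shows "ext_eff n i \<bullet> (pure_state n 0 + pure_state n b)
           = (2 * (rn n)\<^sup>2 * cos (real b * pi / real n) * cos (of_int (2 * int i - int b) * pi / real n) + 2)
             / (1 + (rn n)\<^sup>2)"
proof -
  have "ext_eff n i \<bullet> (pure_state n 0 + pure_state n b)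
      = 1 / (1 + (rn n)\<^sup>2) * (2 * (rn n)\<^sup>2 * cos (real b * pi / real n)
               * cos (2 * pi * real i / real n - real b * pi / real n) + 2)"
    using assms unfolding ext_eff_def pure_state_zero pure_state_polar[of n b]
    by (simp only: if_False inner_scaleR_left inner_polar_pair)
  moreover have "2 * pi * real i / real n - real b * pi / real n = of_int (2 * int i - int b) * pi / real n"
    by (simp add: diff_divide_distrib[symmetric] algebra_simps)
  ultimately show ?thesis by simp
qed

lemma ext_eff_odd_inner_adjacent_ne_one:
  assumes "odd n" "n \<ge> 5"
  shows "ext_eff n i \<bullet> (pure_state n 0 + pure_state n 1) \<noteq> 1"
proof
  define c where "c = cos (pi / real n)"
  define k where "k = 2 * int i - 1"
  assume "ext_eff n i \<bullet> (pure_state n 0 + pure_state n 1) = 1"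
  then have "2 * (rn n)\<^sup>2 * c * cos (of_int k * pi / real n) + 2 = 1 + (rn n)\<^sup>2"
    using assms(1) by (simp add: ext_eff_odd_inner_pair c_def k_def add_pos_nonneg)
  moreover have "c > 0" "(rn n)\<^sup>2 * c = 1"
    using rn_squared[of n] cos_pi_div_pos[of n] assms by (auto simp: c_def)
  ultimately have "2 * cos (of_int k * pi / real n) + 2 = 1 + (rn n)\<^sup>2" "(rn n)\<^sup>2 = 1 / c"
    by (algebra, simp add: field_simps)
  then have "cos (of_int k * pi / real n) = (1 / c - 1) / 2"
    by simp
  then show False
    using cos_int_multiple_pi_div_gap[of n k] sec_minus_one_half_bounds[of n] assms
    by (simp add: c_def)
qed

lemma cos_int_multiple_pi_div_eq_zero:
  fixes k :: int
  assumes "n > 0" "cos (of_int k * pi / real n) = 0"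
  obtains j where "odd j" "2 * k = j * int n"
proof -
  obtain j where "odd j" and j: "of_int k * pi / real n = of_int j * (pi / 2)"
    using assms(2) cos_zero_iff_int by metis
  then have "pi * of_int (2 * k) = pi * of_int (j * int n)"
    using assms(1) by (simp add: field_simps)
  then have "real_of_int (2 * k) = real_of_int (j * int n)" by simp
  then have "2 * k = j * int n" by (simp only: of_int_eq_iff)
  with \<open>odd j\<close> show thesis by (rule that)
qed

lemma ext_eff_even_inner_ne_one:
  assumes "even n" "n \<ge> 6" and b: "(b = 1 \<and> n mod 4 = 2) \<or> (b = 2 \<and> n mod 4 = 0)"
  shows "ext_eff n i \<bullet> (pure_state n 0 + pure_state n b) \<noteq> 1"
proof
  define k where "k = 2 * int i - 1 - int b"
  assume "ext_eff n i \<bullet> (pure_state n 0 + pure_state n b) = 1"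
  then have "(rn n)\<^sup>2 * cos (real b * pi / real n) * cos (of_int k * pi / real n) = 0"
    using assms(1) by (simp add: ext_eff_even_inner_pair k_def)
  moreover have "cos (real b * pi / real n) > 0"
  proof (rule cos_gt_zero_pi)
    have "real b * pi / real n \<le> 2 * pi / real n" using b by (intro divide_right_mono) auto
    also have "\<dots> \<le> 2 * pi / 6" using assms(2) by (intro divide_left_mono) auto
    finally have "real b * pi / real n \<le> 2 * pi / 6" .
    moreover have "0 \<le> real b * pi / real n" by simp
    ultimately show "-(pi / 2) < real b * pi / real n" "real b * pi / real n < pi / 2"
      using pi_gt_zero by linarith+
  qed
  ultimately have "cos (of_int k * pi / real n) = 0"
    using rn_pos[of n] assms(2) by simp
  then obtain j where "odd j" "2 * k = j * int n"
    using assms(2) cos_int_multiple_pi_div_eq_zero[of n k] by auto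
  then have "(2 * k) mod 4 = ((j mod 4) * int (n mod 4)) mod 4"
    by (simp add: mod_mult_eq zmod_int)
  with b \<open>odd j\<close> show False
    unfolding k_def by (elim disjE conjE) (simp_all, presburger+)
qed

text \<open>For \<open>n \<equiv> 0 (mod 4)\<close> the adjacent pair \<open>\<omega>\<^sub>0, \<omega>\<^sub>1\<close> does admit a symmetric extremal effect.\<close>

definition witness_index :: "nat \<Rightarrow> nat" where
  "witness_index n = (if odd n \<or> n mod 4 = 2 then 1 else 2)"

lemma ext_eff_inner_witness_pair_ne_one:
  assumes "(odd n \<and> n \<ge> 5) \<or> (even n \<and> n \<ge> 6)"
  shows "ext_eff n i \<bullet> (pure_state n 0 + pure_state n (witness_index n)) \<noteq> 1"
proof (cases "odd n")
  case True
  then show ?thesis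
    using assms ext_eff_odd_inner_adjacent_ne_one by (simp add: witness_index_def)
next
  case False
  then have "even n" "n \<ge> 6" using assms by auto
  moreover have "(witness_index n = 1 \<and> n mod 4 = 2) \<or> (witness_index n = 2 \<and> n mod 4 = 0)"
    using False unfolding witness_index_def by presburger
  ultimately show ?thesis by (rule ext_eff_even_inner_ne_one)
qed

lemma extreme_point_of_effect_set_cases:
  assumes "e extreme_point_of effect_set n"
  obtains "e = 0" | "e = unit_eff" | i where "i < n" "e = ext_eff n i"
    | i where "i < n" "e = unit_eff - ext_eff n i"
  using extreme_point_of_convex_hull[OF assms[unfolded effect_set_def]] by blast

lemma extreme_effect_inner_ne_one:
  assumes "e extreme_point_of effect_set n" "unit_eff \<bullet> v = 2" "\<And>i. i < n \<Longrightarrow> ext_eff n i \<bullet> v \<noteq> 1"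
  shows "e \<bullet> v \<noteq> 1"
  using assms(1)
  by (cases rule: extreme_point_of_effect_set_cases) (use assms(2,3) in \<open>auto simp: inner_diff_left\<close>)

lemma unit_eff_inner_pure_state: "unit_eff \<bullet> pure_state n i = 1"
  by (simp add: unit_eff_def pure_state_def inner_vector3)

lemma prob_eq_prob_complement_iff:
  assumes "unit_eff \<bullet> w1 = 1"
  shows "prob e w2 = prob (unit_eff - e) w1 \<longleftrightarrow> e \<bullet> (w1 + w2) = 1"
  using assms by (auto simp: prob_def inner_diff_left inner_add_right)

lemma pure_state_zero_neq:
  assumes "n \<ge> 3" "0 < b" "2 * b < n"
  shows "pure_state n 0 \<noteq> pure_state n b"
proof
  assume "pure_state n 0 = pure_state n b"
  then have "pure_state n 0 $ 2 = pure_state n b $ 2" by simp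
  then have "rn n * sin (2 * pi * real b / real n) = 0"
    by (simp add: pure_state_def)
  moreover have "sin (2 * pi * real b / real n) > 0"
  proof (rule sin_gt_zero)
    have "2 * real b < real n" using assms(3) by linarith
    then show "2 * pi * real b / real n < pi" using assms(1) by (simp add: field_simps)
  qed (use assms in simp)
  ultimately show False using rn_pos[OF assms(1)] by simp
qed

theorem theorem1:
  fixes n :: nat
  assumes "n \<ge> 3"
    and "(odd n \<and> n \<ge> 5) \<or> (even n \<and> n \<ge> 6)"
  shows "\<not> information_symmetry n"
proof
  define w1 where "w1 = pure_state n 0"
  define w2 where "w2 = pure_state n (witness_index n)"
  have "w1 \<in> pure_states n" "w2 \<in> pure_states n" "w1 \<noteq> w2"
    using assms pure_state_zero_neq[of n "witness_index n"]
    by (auto simp: w1_def w2_def pure_states_def witness_index_def)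
  moreover assume "information_symmetry n"
  ultimately obtain e where e: "e extreme_point_of effect_set n" "prob e w2 = prob (unit_eff - e) w1"
    unfolding information_symmetry_def by blast
  have symmetric: "e \<bullet> (w1 + w2) = 1"
    using e(2) by (simp add: prob_eq_prob_complement_iff w1_def unit_eff_inner_pure_state)
  have "unit_eff \<bullet> (w1 + w2) = 2"
    by (simp add: w1_def w2_def inner_add_right unit_eff_inner_pure_state)
  then have "e \<bullet> (w1 + w2) \<noteq> 1"
    using ext_eff_inner_witness_pair_ne_one[OF assms(2)]
    by (intro extreme_effect_inner_ne_one[OF e(1)]) (simp_all add: w1_def w2_def)
  with symmetric show False by contradiction
qed

end
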